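(* For any graph $G$ and any bipartite graph $H$ in which all vertex degrees are odd, $\alpha_{\mathrm{od}}(\mu[G,H])\ge \frac12|H|\cdot\alpha_{\mathrm{od}}(G\,\Box\,K_2)$.
   Context: For graphs $G$ and $H$, $\mu[G,H]$ is the graph obtained by replacing each vertex $w\in V(H)$ with a copy $G_w$ of $G$ and, for every edge $w_1w_2\in E(H)$, adding the perfect matching between $G_{w_1}$ and $G_{w_2}$ joining the two copies of each vertex of $G$. $G\,\Box\,K_2$ is the Cartesian product of $G$ with an edge (two copies of $G$ with a perfect matching between corresponding vertices). An odd independent set in a graph $F=(V,E)$ is an independent set $S$ such that every $v\in V\setminus S$ has either no neighbor or an odd number of neighbors in $S$; $\alpha_{\mathrm{od}}(F)$ is the maximum size of such a set. $|H|$ is the number of vertices. *)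

theory Defs
  imports Complex_Main
begin

definition graph :: "'a set \<Rightarrow> ('a \<Rightarrow> 'a \<Rightarrow> bool) \<Rightarrow> bool" where
  "graph V E \<longleftrightarrow> finite V \<and> (\<forall>x y. E x y \<longrightarrow> x \<in> V \<and> y \<in> V)
     \<and> (\<forall>x y. E x y \<longrightarrow> E y x) \<and> (\<forall>x. \<not> E x x)"

definition neighbors :: "'a set \<Rightarrow> ('a \<Rightarrow> 'a \<Rightarrow> bool) \<Rightarrow> 'a \<Rightarrow> 'a set" where
  "neighbors V E v = {u \<in> V. E v u}"

definition degree :: "'a set \<Rightarrow> ('a \<Rightarrow> 'a \<Rightarrow> bool) \<Rightarrow> 'a \<Rightarrow> nat" where
  "degree V E v = card (neighbors V E v)"

definition bipartite :: "'a set \<Rightarrow> ('a \<Rightarrow> 'a \<Rightarrow> bool) \<Rightarrow> bool" where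
  "bipartite V E \<longleftrightarrow> (\<exists>A B. A \<union> B = V \<and> A \<inter> B = {} \<and>
     (\<forall>x y. E x y \<longrightarrow> (x \<in> A \<and> y \<in> B) \<or> (x \<in> B \<and> y \<in> A)))"

definition independent :: "'a set \<Rightarrow> ('a \<Rightarrow> 'a \<Rightarrow> bool) \<Rightarrow> 'a set \<Rightarrow> bool" where
  "independent V E S \<longleftrightarrow> S \<subseteq> V \<and> (\<forall>x\<in>S. \<forall>y\<in>S. \<not> E x y)"

definition odd_independent :: "'a set \<Rightarrow> ('a \<Rightarrow> 'a \<Rightarrow> bool) \<Rightarrow> 'a set \<Rightarrow> bool" where
  "odd_independent V E S \<longleftrightarrow> independent V E S \<and>
     (\<forall>v \<in> V - S. card (neighbors V E v \<inter> S) = 0 \<or> odd (card (neighbors V E v \<inter> S)))"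

definition alpha_od :: "'a set \<Rightarrow> ('a \<Rightarrow> 'a \<Rightarrow> bool) \<Rightarrow> nat" where
  "alpha_od V E = Max (card ` {S. odd_independent V E S})"

text \<open>mu[G,H]: vertex (v,w) is the copy of v in G_w.\<close>
definition mu_V :: "'a set \<Rightarrow> 'b set \<Rightarrow> ('a \<times> 'b) set" where
  "mu_V VG VH = VG \<times> VH"

definition mu_E :: "('a \<Rightarrow> 'a \<Rightarrow> bool) \<Rightarrow> ('b \<Rightarrow> 'b \<Rightarrow> bool) \<Rightarrow> ('a \<times> 'b) \<Rightarrow> ('a \<times> 'b) \<Rightarrow> bool" where
  "mu_E EG EH p q \<longleftrightarrow> (snd p = snd q \<and> EG (fst p) (fst q)) \<or> (fst p = fst q \<and> EH (snd p) (snd q))"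

text \<open>G \<box> K_2: two copies (indexed by bool) with the matching between them.\<close>
definition boxK2_V :: "'a set \<Rightarrow> ('a \<times> bool) set" where
  "boxK2_V VG = VG \<times> (UNIV :: bool set)"

definition boxK2_E :: "('a \<Rightarrow> 'a \<Rightarrow> bool) \<Rightarrow> ('a \<times> bool) \<Rightarrow> ('a \<times> bool) \<Rightarrow> bool" where
  "boxK2_E EG p q \<longleftrightarrow> (snd p = snd q \<and> EG (fst p) (fst q)) \<or> (fst p = fst q \<and> snd p \<noteq> snd q)"

end

theory Submission
  imports Defs
begin

text \<open>Let S be a maximum odd independent set of G \<box> K_2 and g a proper 2-colouring of H.
  Filling each copy G_w with the layer of S on side g w gives an odd independent set of mu[G,H]:
  a vertex (v,w) outside it sees the same G-neighbours as (v, g w) does in G \<box> K_2, and where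
  (v, g w) sees the single matching neighbour (v, \<not> g w) \<in> S, the vertex (v,w) sees all of its
  H-neighbours instead. Since deg w is odd, this preserves both parity and non-vanishing of the
  count. The colourings g and \<not> g together use each layer once per vertex of H, so the two
  lifted sets have total size |H| |S| and the larger one has at least half of it.\<close>

lemma finite_odd_independent_sets:
  "finite V \<Longrightarrow> finite {S. odd_independent V E S}"
  by (rule finite_subset[of _ "Pow V"]) (auto simp: odd_independent_def independent_def)

lemma card_le_alpha_od:
  "finite V \<Longrightarrow> odd_independent V E S \<Longrightarrow> card S \<le> alpha_od V E"
  unfolding alpha_od_def by (auto intro: Max_ge finite_odd_independent_sets)

lemma alpha_od_attained:
  assumes "finite V"
  obtains S where "odd_independent V E S" "card S = alpha_od V E"
proof -
  have "odd_independent V E {}"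
    by (auto simp: odd_independent_def independent_def)
  then have "alpha_od V E \<in> card ` {S. odd_independent V E S}"
    unfolding alpha_od_def using assms by (intro Max_in finite_imageI finite_odd_independent_sets) auto
  then obtain S where "odd_independent V E S" "alpha_od V E = card S"
    by blast
  then show thesis using that by simp
qed

lemma bipartite_two_colouring:
  assumes "bipartite V E"
  obtains g :: "'a \<Rightarrow> bool" where "\<And>x y. E x y \<Longrightarrow> g x \<noteq> g y"
proof -
  obtain A B where "A \<inter> B = {}" "\<forall>x y. E x y \<longrightarrow> (x \<in> A \<and> y \<in> B) \<or> (x \<in> B \<and> y \<in> A)"
    using assms unfolding bipartite_def by blast
  then have "E x y \<Longrightarrow> (x \<in> B) \<noteq> (y \<in> B)" for x y by blast
  then show thesis by (rule that)
qed

lemma card_boxK2_neighbors_Int: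
  assumes "finite VG" "v \<in> VG" "S \<subseteq> boxK2_V VG"
  shows "card (neighbors (boxK2_V VG) (boxK2_E EG) (v, c) \<inter> S)
    = card (neighbors VG EG v \<inter> {u. (u, c) \<in> S}) + (if (v, \<not> c) \<in> S then 1 else 0)"
proof -
  let ?C = "neighbors VG EG v \<inter> {u. (u, c) \<in> S}"
  have "neighbors (boxK2_V VG) (boxK2_E EG) (v, c) \<inter> S
      = (\<lambda>u. (u, c)) ` ?C \<union> (if (v, \<not> c) \<in> S then {(v, \<not> c)} else {})"
    using assms(2,3) by (auto simp: neighbors_def boxK2_V_def boxK2_E_def)
  moreover have "card ((\<lambda>u. (u, c)) ` ?C) = card ?C"
    by (rule card_image) (auto simp: inj_on_def)
  moreover have "finite ?C"
    using assms(1) by (simp add: neighbors_def)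
  moreover have "(v, \<not> c) \<notin> (\<lambda>u. (u, c)) ` ?C"
    by auto
  ultimately show ?thesis by auto
qed

definition mu_lift :: "'a set \<Rightarrow> 'b set \<Rightarrow> ('b \<Rightarrow> bool) \<Rightarrow> ('a \<times> bool) set \<Rightarrow> ('a \<times> 'b) set" where
  "mu_lift VG VH g S = {(v, w). v \<in> VG \<and> w \<in> VH \<and> (v, g w) \<in> S}"

lemma card_mu_neighbors_Int_mu_lift:
  assumes "graph VG EG" "graph VH EH" "\<And>w w'. EH w w' \<Longrightarrow> g w \<noteq> g w'"
    and "v \<in> VG" "w \<in> VH"
  shows "card (neighbors (mu_V VG VH) (mu_E EG EH) (v, w) \<inter> mu_lift VG VH g S)
    = card (neighbors VG EG v \<inter> {u. (u, g w) \<in> S})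
      + (if (v, \<not> g w) \<in> S then degree VH EH w else 0)"
proof -
  let ?C = "neighbors VG EG v \<inter> {u. (u, g w) \<in> S}"
  let ?D = "if (v, \<not> g w) \<in> S then (\<lambda>w'. (v, w')) ` neighbors VH EH w else {}"
  have fin: "finite VG" "finite VH"
    and edges: "\<And>x y. EG x y \<Longrightarrow> x \<in> VG \<and> y \<in> VG" "\<And>x y. EH x y \<Longrightarrow> x \<in> VH \<and> y \<in> VH"
    using assms(1,2) by (auto simp: graph_def)
  have other_side: "EH w w' \<Longrightarrow> g w' = (\<not> g w)" for w'
    using assms(3) by blast
  have "neighbors (mu_V VG VH) (mu_E EG EH) (v, w) \<inter> mu_lift VG VH g S = (\<lambda>u. (u, w)) ` ?C \<union> ?D"
    using assms(4,5) edges other_side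
    by (auto simp: neighbors_def mu_V_def mu_E_def mu_lift_def)
  also have "card \<dots> = card ((\<lambda>u. (u, w)) ` ?C) + card ?D"
    using fin assms(3) by (intro card_Un_disjoint) (auto simp: neighbors_def)
  also have "card ((\<lambda>u. (u, w)) ` ?C) = card ?C"
    by (rule card_image) (auto simp: inj_on_def)
  also have "card ?D = (if (v, \<not> g w) \<in> S then degree VH EH w else 0)"
    unfolding degree_def by (simp add: card_image inj_on_def)
  finally show ?thesis .
qed

lemma independent_mu_lift:
  assumes "\<And>w w'. EH w w' \<Longrightarrow> g w \<noteq> g w'"
    and "independent (boxK2_V VG) (boxK2_E EG) S"
  shows "independent (mu_V VG VH) (mu_E EG EH) (mu_lift VG VH g S)"
proof -
  have "\<not> mu_E EG EH (v, w) (v', w')"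
    if "(v, g w) \<in> S" "(v', g w') \<in> S" for v w v' w'
  proof
    assume "mu_E EG EH (v, w) (v', w')"
    then have "boxK2_E EG (v, g w) (v', g w')"
      using assms(1) by (auto simp: mu_E_def boxK2_E_def)
    with that assms(2) show False
      by (auto simp: independent_def)
  qed
  then show ?thesis
    by (auto simp: independent_def mu_V_def mu_lift_def)
qed

lemma odd_independent_mu_lift:
  assumes "graph VG EG" "graph VH EH" "\<And>w w'. EH w w' \<Longrightarrow> g w \<noteq> g w'"
    and "\<forall>w \<in> VH. odd (degree VH EH w)"
    and S: "odd_independent (boxK2_V VG) (boxK2_E EG) S"
  shows "odd_independent (mu_V VG VH) (mu_E EG EH) (mu_lift VG VH g S)"
  unfolding odd_independent_def
proof (intro conjI ballI)
  show "independent (mu_V VG VH) (mu_E EG EH) (mu_lift VG VH g S)"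
    using assms(3) S by (auto simp: odd_independent_def intro: independent_mu_lift)
next
  fix p assume p: "p \<in> mu_V VG VH - mu_lift VG VH g S"
  then obtain v w where vw: "p = (v, w)" "v \<in> VG" "w \<in> VH" "(v, g w) \<notin> S"
    by (auto simp: mu_V_def mu_lift_def)
  define a where "a = card (neighbors VG EG v \<inter> {u. (u, g w) \<in> S})"
  define b where "b = ((v, \<not> g w) \<in> S)"
  have "finite VG" "S \<subseteq> boxK2_V VG"
    using S assms(1) by (auto simp: odd_independent_def independent_def graph_def)
  then have "card (neighbors (boxK2_V VG) (boxK2_E EG) (v, g w) \<inter> S) = a + (if b then 1 else 0)"
    using vw(2) unfolding a_def b_def by (intro card_boxK2_neighbors_Int)
  moreover have "(v, g w) \<in> boxK2_V VG - S"
    using vw by (simp add: boxK2_V_def)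
  ultimately have "a + (if b then 1 else 0) = 0 \<or> odd (a + (if b then 1 else 0))"
    using S unfolding odd_independent_def by metis
  moreover have "odd (degree VH EH w)"
    using assms(4) vw(3) by blast
  moreover have "card (neighbors (mu_V VG VH) (mu_E EG EH) p \<inter> mu_lift VG VH g S)
      = a + (if b then degree VH EH w else 0)"
    unfolding vw(1) a_def b_def using assms(1-3) vw(2,3) by (rule card_mu_neighbors_Int_mu_lift)
  ultimately show "card (neighbors (mu_V VG VH) (mu_E EG EH) p \<inter> mu_lift VG VH g S) = 0 \<or>
      odd (card (neighbors (mu_V VG VH) (mu_E EG EH) p \<inter> mu_lift VG VH g S))"
    by (cases b) auto
qed

lemma card_layers_bool:
  fixes S :: "('a \<times> bool) set"
  assumes "finite S"
  shows "card {v. (v, c) \<in> S} + card {v. (v, \<not> c) \<in> S} = card S"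
proof -
  let ?A = "(\<lambda>v. (v, c)) ` {v. (v, c) \<in> S}" and ?B = "(\<lambda>v. (v, \<not> c)) ` {v. (v, \<not> c) \<in> S}"
  have fin: "finite {v. (v, b) \<in> S}" for b
    using finite_vimageI[OF assms, of "\<lambda>v. (v, b)"] by (simp add: vimage_def inj_on_def)
  have "S = ?A \<union> ?B"
  proof (rule equalityI)
    show "S \<subseteq> ?A \<union> ?B"
    proof
      fix p assume "p \<in> S"
      moreover obtain v b where "p = (v, b)"
        by fastforce
      ultimately show "p \<in> ?A \<union> ?B"
        by (cases b; cases c) simp_all
    qed
  qed blast
  then have "card S = card (?A \<union> ?B)"
    by (rule arg_cong)
  also have "\<dots> = card ?A + card ?B"
    using fin by (intro card_Un_disjoint) auto
  also have "\<dots> = card {v. (v, c) \<in> S} + card {v. (v, \<not> c) \<in> S}"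
    by (simp add: card_image inj_on_def)
  finally show ?thesis ..
qed

lemma card_mu_lift:
  assumes "finite VG" "finite VH"
  shows "card (mu_lift VG VH g S) = (\<Sum>w\<in>VH. card {v \<in> VG. (v, g w) \<in> S})"
proof -
  have "mu_lift VG VH g S = (\<lambda>(w, v). (v, w)) ` (SIGMA w:VH. {v \<in> VG. (v, g w) \<in> S})"
    by (auto simp: mu_lift_def)
  moreover have "inj_on (\<lambda>(w, v). (v, w)) (SIGMA w:VH. {v \<in> VG. (v, g w) \<in> S})"
    by (auto simp: inj_on_def)
  ultimately show ?thesis
    using assms by (simp add: card_image)
qed

lemma card_mu_lift_complementary:
  assumes "finite VG" "finite VH" "S \<subseteq> boxK2_V VG"
  shows "card (mu_lift VG VH g S) + card (mu_lift VG VH (Not \<circ> g) S) = card VH * card S"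
proof -
  have layer: "{v \<in> VG. (v, b) \<in> S} = {v. (v, b) \<in> S}" for b
    using assms(3) by (auto simp: boxK2_V_def)
  have "finite S"
    using assms(1,3) by (simp add: boxK2_V_def finite_subset)
  have "card (mu_lift VG VH g S) + card (mu_lift VG VH (Not \<circ> g) S)
      = (\<Sum>w\<in>VH. card {v. (v, g w) \<in> S} + card {v. (v, \<not> g w) \<in> S})"
    using assms(1,2) by (simp add: card_mu_lift layer sum.distrib)
  also have "\<dots> = (\<Sum>w\<in>VH. card S)"
    using \<open>finite S\<close> by (simp add: card_layers_bool)
  finally show ?thesis by simp
qed

theorem theorem4:
  fixes VG :: "'a set" and EG :: "'a \<Rightarrow> 'a \<Rightarrow> bool"
    and VH :: "'b set" and EH :: "'b \<Rightarrow> 'b \<Rightarrow> bool"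
  assumes "graph VG EG" and "graph VH EH"
    and "bipartite VH EH"
    and "\<forall>w \<in> VH. odd (degree VH EH w)"
  shows "real (alpha_od (mu_V VG VH) (mu_E EG EH))
           \<ge> 1/2 * real (card VH) * real (alpha_od (boxK2_V VG) (boxK2_E EG))"
proof -
  have fin: "finite VG" "finite VH" "finite (boxK2_V VG)" "finite (mu_V VG VH)"
    using assms(1,2) by (auto simp: graph_def boxK2_V_def mu_V_def)
  obtain S where S: "odd_independent (boxK2_V VG) (boxK2_E EG) S"
    and card_S: "card S = alpha_od (boxK2_V VG) (boxK2_E EG)"
    using alpha_od_attained[OF fin(3)] by blast
  have lift_le: "card (mu_lift VG VH h S) \<le> alpha_od (mu_V VG VH) (mu_E EG EH)"
    if "\<And>w w'. EH w w' \<Longrightarrow> h w \<noteq> h w'" for h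
    by (rule card_le_alpha_od[OF fin(4) odd_independent_mu_lift[OF assms(1,2) that assms(4) S]])
  obtain g :: "'b \<Rightarrow> bool" where g: "\<And>w w'. EH w w' \<Longrightarrow> g w \<noteq> g w'"
    using bipartite_two_colouring[OF assms(3)] by blast
  have "card VH * card S = card (mu_lift VG VH g S) + card (mu_lift VG VH (Not \<circ> g) S)"
    using S fin(1,2) by (simp add: card_mu_lift_complementary odd_independent_def independent_def)
  also have "\<dots> \<le> 2 * alpha_od (mu_V VG VH) (mu_E EG EH)"
    using lift_le[of g] lift_le[of "Not \<circ> g"] g by fastforce
  finally have "real (card VH * card S) \<le> real (2 * alpha_od (mu_V VG VH) (mu_E EG EH))"
    by (rule of_nat_mono)
  then show ?thesis
    by (simp add: card_S)
qed

end
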